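(* Consider the networked SIR epidemic-opinion model described in the context, under the standing assumption stated there. If $s_i(0),x_i(0),o_i(0)\in[0,1]$ for all $i\in[n]$, then each susceptible state $s_i(t)$, $i\in[n]$, is monotonically decreasing (non-increasing) in $t\ge 0$.
   Context: There are $n$ communities. For $t\ge0$ and $i\in[n]$, $s_i(t),x_i(t),o_i(t)\in[0,1]$ denote the susceptible proportion, infected proportion and opinion (belief in the severity of the epidemic) of community $i$. The disease transmission network is a directed graph $\mathcal G=(\mathcal V,\mathcal E)$ on $n$ nodes with edge weights $\beta_{ij}>0$ if $(v_j,v_i)\in\mathcal E$ (and $\beta_{ij}=0$ otherwise); $\mathcal N_i=\{v_j:(v_j,v_i)\in\mathcal E\}$. The opinion network is a directed graph $\bar{\mathcal G}$ on the same nodes with nonnegative weights $\bar a_{ij}$ and Laplacian $\bar L=\mathrm{diag}(k_1,\dots,k_n)-\bar A$, where $[\bar A]_{ij}=\bar a_{ij}$ and $k_i=\sum_j \bar a_{ij}$. Parameters: $\beta_{\min}>0$, $\gamma_{\min}>0$, recovery rates $\gamma_i$. The model is $\dot s_i=-s_i\sum_{j\in\mathcal N_i}\big(\beta_{ij}-(\beta_{ij}-\beta_{\min})o_i\big)x_j$, $\dot x_i=s_i\sum_{j\in\mathcal N_i}\big(\beta_{ij}-(\beta_{ij}-\beta_{\min})o_i\big)x_j-\big(\gamma_{\min}+(\gamma_i-\gamma_{\min})o_i\big)x_i$, $\dot o=(\mathbf 1_n-s)-(\bar L+I_n)o$. Standing assumption: for all $i$, $s_i(0),x_i(0),o_i(0)\in[0,1]$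 with $s_i(0)+x_i(0)\le 1$ (the remainder being the recovered proportion), $\gamma_i\ge\gamma_{\min}>0$, $\beta_{ij}\ge\beta_{\min}>0$ for all $j\in\mathcal N_i$, and both $\mathcal G$ and $\bar{\mathcal G}$ are strongly connected. *)

theory Defs
  imports "HOL-Analysis.Analysis"
begin

text \<open>Nodes are 0..<n. A weighted digraph is a weight matrix w, where w i j > 0
  means there is an edge (v_j, v_i), i.e. an edge from node j to node i.\<close>

definition digraph_edges :: "nat \<Rightarrow> (nat \<Rightarrow> nat \<Rightarrow> real) \<Rightarrow> (nat \<times> nat) set" where
  "digraph_edges n w = {(j, i). j < n \<and> i < n \<and> w i j > 0}"

definition strongly_connected :: "nat \<Rightarrow> (nat \<Rightarrow> nat \<Rightarrow> real) \<Rightarrow> bool" where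
  "strongly_connected n w \<longleftrightarrow> (\<forall>i<n. \<forall>j<n. (i, j) \<in> (digraph_edges n w)\<^sup>*)"

definition in_nbrs :: "nat \<Rightarrow> (nat \<Rightarrow> nat \<Rightarrow> real) \<Rightarrow> nat \<Rightarrow> nat set" where
  "in_nbrs n w i = {j. j < n \<and> w i j > 0}"

end

theory Submission
  imports Defs
begin

(* Along solutions s_i' = - s_i F_i, where the force of infection F_i = sum_j b_ij(o_i) x_j has
   rates b_ij(o_i) = beta_min + (beta_ij - beta_min) (1 - o_i). So s_i is nonincreasing once
   s_i >= 0, x_j >= 0 and o_i <= 1 are known for all t >= 0. These sign conditions follow in turn
   (s first, then o using s >= 0, then x using both) from a single invariance principle: if
   y_j(0) <= 0 and on every compact time interval y_j^+ y_j' <= B y_j^+ sum_k y_k^+, then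
   V = sum_j (y_j^+)^2 satisfies V(0) = 0 and V' <= C V, hence V = 0 by Gronwall's inequality. *)

lemma has_real_derivative_pos_part_power2:
  "((\<lambda>y::real. (max 0 y)\<^sup>2) has_real_derivative 2 * max 0 y) (at y)"
proof (cases y "0::real" rule: linorder_cases)
  case less
  have "((\<lambda>y::real. 0) has_real_derivative 2 * max 0 y) (at y)"
    using less by simp
  then show ?thesis
    by (rule has_field_derivative_transform_within_open[where S = "{..<0}"]) (use less in auto)
next
  case greater
  have "((\<lambda>y::real. y\<^sup>2) has_real_derivative 2 * max 0 y) (at y)"
    using greater DERIV_pow[of 2 y] by simp
  then show ?thesis
    by (rule has_field_derivative_transform_within_open[where S = "{0<..}"]) (use greater in auto)
next
  case equal
  have "((\<lambda>z::real. (max 0 z)\<^sup>2 / z) \<longlongrightarrow> 0) (at 0)"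
  proof (rule Lim_null_comparison[where g = abs])
    have "\<bar>(max 0 z)\<^sup>2 / z\<bar> \<le> \<bar>z\<bar>" for z :: real
      by (cases "z > 0") (simp_all add: power2_eq_square)
    then show "\<forall>\<^sub>F z in at 0. norm ((max 0 z)\<^sup>2 / z) \<le> \<bar>z::real\<bar>"
      by (simp add: always_eventually)
    show "(abs \<longlongrightarrow> 0) (at (0::real))"
      using tendsto_rabs_zero[OF tendsto_ident_at[of "0::real" UNIV]] by simp
  qed
  then show ?thesis
    using equal by (simp add: has_field_derivative_iff)
qed

lemma neg_part_mult_le:
  fixes a c :: real
  shows "max 0 (- a) * (c * a) \<le> \<bar>c\<bar> * max 0 (- a) * max 0 (- a)"
proof (cases "a < 0")
  case True
  have "- c * (a * a) \<le> \<bar>c\<bar> * (a * a)"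
    by (rule mult_right_mono) auto
  with True show ?thesis
    by (simp add: mult_ac)
qed simp

lemma neg_part_mult_neg_le:
  fixes a b c :: real
  assumes "0 \<le> c"
  shows "max 0 (- a) * (c * - b) \<le> c * max 0 (- a) * max 0 (- b)"
proof -
  have "c * max 0 (- a) * - b \<le> c * max 0 (- a) * max 0 (- b)"
    using assms by (intro mult_left_mono) auto
  then show ?thesis
    by (simp only: mult_ac)
qed

lemma pos_part_mult_diff_le:
  fixes u v :: real
  shows "max 0 (u - 1) * (v - u) \<le> max 0 (u - 1) * max 0 (v - 1)"
proof (cases "1 < u")
  case True
  then show ?thesis
    by (intro mult_left_mono) auto
qed simp

lemma neg_part_mult_le_sum:
  fixes a :: "'i \<Rightarrow> real"
  assumes "finite I" "j \<in> I" "\<bar>c\<bar> \<le> B"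
  shows "max 0 (- a j) * (c * a j) \<le> B * max 0 (- a j) * (\<Sum>k\<in>I. max 0 (- a k))"
proof -
  have "max 0 (- a j) * (c * a j) \<le> \<bar>c\<bar> * max 0 (- a j) * max 0 (- a j)"
    by (rule neg_part_mult_le)
  also have "\<dots> \<le> B * max 0 (- a j) * max 0 (- a j)"
    using assms(3) by (intro mult_right_mono) auto
  also have "\<dots> \<le> B * max 0 (- a j) * (\<Sum>k\<in>I. max 0 (- a k))"
    using assms by (intro mult_left_mono member_le_sum) auto
  finally show ?thesis .
qed

lemma neg_part_mult_sum_le:
  fixes a c :: "'i \<Rightarrow> real"
  assumes "finite I" "J \<subseteq> I" "0 \<le> B" "\<And>k. k \<in> J \<Longrightarrow> 0 \<le> c k \<and> c k \<le> B"
  shows "max 0 (- b) * (\<Sum>k\<in>J. c k * - a k) \<le> B * max 0 (- b) * (\<Sum>k\<in>I. max 0 (- a k))"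
proof -
  have "max 0 (- b) * (\<Sum>k\<in>J. c k * - a k) \<le> (\<Sum>k\<in>J. B * max 0 (- b) * max 0 (- a k))"
    unfolding sum_distrib_left
  proof (rule sum_mono)
    fix k assume "k \<in> J"
    have "max 0 (- b) * (c k * - a k) \<le> c k * max 0 (- b) * max 0 (- a k)"
      using assms(4)[OF \<open>k \<in> J\<close>] by (intro neg_part_mult_neg_le) auto
    also have "\<dots> \<le> B * max 0 (- b) * max 0 (- a k)"
      using assms(4)[OF \<open>k \<in> J\<close>] by (intro mult_right_mono) auto
    finally show "max 0 (- b) * (c k * - a k) \<le> B * max 0 (- b) * max 0 (- a k)" .
  qed
  also have "\<dots> = B * max 0 (- b) * (\<Sum>k\<in>J. max 0 (- a k))"
    by (simp add: sum_distrib_left)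
  also have "\<dots> \<le> B * max 0 (- b) * (\<Sum>k\<in>I. max 0 (- a k))"
    using assms by (intro mult_left_mono sum_mono2) auto
  finally show ?thesis .
qed

lemma pos_part_mult_sum_diff_le:
  fixes a u :: "'i \<Rightarrow> real"
  assumes "finite I" "\<And>k. k \<in> I \<Longrightarrow> 0 \<le> a k \<and> a k \<le> A"
  shows "max 0 (v - 1) * (\<Sum>k\<in>I. a k * (u k - v)) \<le> A * max 0 (v - 1) * (\<Sum>k\<in>I. max 0 (u k - 1))"
  unfolding sum_distrib_left
proof (rule sum_mono)
  fix k assume "k \<in> I"
  have "max 0 (v - 1) * (a k * (u k - v)) = a k * (max 0 (v - 1) * (u k - v))"
    by (simp add: mult_ac)
  also have "\<dots> \<le> a k * (max 0 (v - 1) * max 0 (u k - 1))"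
    using assms(2)[OF \<open>k \<in> I\<close>] by (intro mult_left_mono pos_part_mult_diff_le) auto
  also have "\<dots> \<le> A * max 0 (v - 1) * max 0 (u k - 1)"
    using assms(2)[OF \<open>k \<in> I\<close>] by (simp add: mult.assoc mult_right_mono)
  finally show "max 0 (v - 1) * (a k * (u k - v)) \<le> A * max 0 (v - 1) * max 0 (u k - 1)" .
qed

lemma DERIV_nonpos_imp_nonincreasing_within:
  fixes f f' :: "real \<Rightarrow> real"
  assumes "a \<le> b"
    and "\<And>t. t \<in> {a..b} \<Longrightarrow> (f has_real_derivative f' t) (at t within {a..b})"
    and "\<And>t. t \<in> {a..b} \<Longrightarrow> f' t \<le> 0"
  shows "f b \<le> f a"
proof -
  obtain z where z: "z \<in> {a..b}" "f b - f a = f' z * (b - a)"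
    using mvt_very_simple[OF \<open>a \<le> b\<close>, of f "\<lambda>t. (*) (f' t)"]
      assms(2)[THEN has_field_derivative_imp_has_derivative] by auto
  have "f' z * (b - a) \<le> 0"
    using assms(1,3) z(1) by (simp add: mult_nonpos_nonneg)
  with z(2) show ?thesis by linarith
qed

lemma Gronwall_exp_bound:
  fixes V V' :: "real \<Rightarrow> real"
  assumes "a \<le> b"
    and deriv: "\<And>t. t \<in> {a..b} \<Longrightarrow> (V has_real_derivative V' t) (at t within {a..b})"
    and growth: "\<And>t. t \<in> {a..b} \<Longrightarrow> V' t \<le> C * V t"
  shows "V b \<le> exp (C * (b - a)) * V a"
proof -
  define W where "W t = exp (- C * (t - a)) * V t" for t
  have "W b \<le> W a"
  proof (rule DERIV_nonpos_imp_nonincreasing_within[OF \<open>a \<le> b\<close>])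
    fix t assume t: "t \<in> {a..b}"
    show "(W has_real_derivative exp (- C * (t - a)) * (V' t - C * V t)) (at t within {a..b})"
    proof -
      have "((\<lambda>t. exp (- C * (t - a))) has_real_derivative exp (- C * (t - a)) * (- C)) (at t within {a..b})"
        by (auto intro!: derivative_eq_intros)
      from DERIV_mult[OF this deriv[OF t]] show ?thesis
        unfolding W_def[abs_def] by (simp add: algebra_simps)
    qed
    show "exp (- C * (t - a)) * (V' t - C * V t) \<le> 0"
      using growth[OF t] by (simp add: mult_nonneg_nonpos)
  qed
  then have "exp (- C * (b - a)) * V b \<le> V a"
    by (simp add: W_def)
  then have "exp (C * (b - a)) * (exp (- C * (b - a)) * V b) \<le> exp (C * (b - a)) * V a"
    by (rule mult_left_mono) simp
  then show ?thesis
    by (simp add: mult.assoc[symmetric] flip: exp_add)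
qed

lemma finite_family_compact_bound:
  fixes f :: "'i \<Rightarrow> 'a::metric_space \<Rightarrow> real"
  assumes "finite I" "compact S" "\<And>i. i \<in> I \<Longrightarrow> continuous_on S (f i)"
  obtains B where "\<And>i t. i \<in> I \<Longrightarrow> t \<in> S \<Longrightarrow> \<bar>f i t\<bar> \<le> B"
proof -
  have "continuous_on S (\<lambda>t. \<Sum>i\<in>I. \<bar>f i t\<bar>)"
    using assms(3) by (intro continuous_intros)
  then obtain B where B: "\<And>t. t \<in> S \<Longrightarrow> norm (\<Sum>i\<in>I. \<bar>f i t\<bar>) \<le> B"
    using continuous_on_compact_bound[OF assms(2)] by metis
  have "\<bar>f i t\<bar> \<le> B" if "i \<in> I" "t \<in> S" for i t
    using member_le_sum[of i I "\<lambda>i. \<bar>f i t\<bar>"] B[OF that(2)] assms(1) that(1) by auto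
  then show ?thesis using that by blast
qed

lemma nonpos_forward_invariant:
  fixes y y' :: "nat \<Rightarrow> real \<Rightarrow> real"
  assumes init: "\<And>j. j < n \<Longrightarrow> y j 0 \<le> 0"
    and deriv: "\<And>j t. j < n \<Longrightarrow> 0 \<le> t \<Longrightarrow> (y j has_real_derivative y' j t) (at t within {0..})"
    and growth: "\<And>T. 0 \<le> T \<Longrightarrow> \<exists>B. \<forall>t\<in>{0..T}. \<forall>j<n.
        max 0 (y j t) * y' j t \<le> B * max 0 (y j t) * (\<Sum>k<n. max 0 (y k t))"
    and "j < n" "0 \<le> t"
  shows "y j t \<le> 0"
proof -
  define u where "u j \<tau> = max 0 (y j \<tau>)" for j \<tau>
  define V where "V \<tau> = (\<Sum>j<n. (u j \<tau>)\<^sup>2)" for \<tau>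
  obtain B where B: "\<And>\<tau> j. \<tau> \<in> {0..t} \<Longrightarrow> j < n \<Longrightarrow> u j \<tau> * y' j \<tau> \<le> B * u j \<tau> * (\<Sum>k<n. u k \<tau>)"
    using growth[OF \<open>0 \<le> t\<close>] unfolding u_def by blast
  have dV: "(V has_real_derivative (\<Sum>j<n. 2 * u j \<tau> * y' j \<tau>)) (at \<tau> within {0..t})"
    if "\<tau> \<in> {0..t}" for \<tau>
proof -
    have "(V has_real_derivative (\<Sum>j<n. 2 * u j \<tau> * y' j \<tau>)) (at \<tau> within {0..})"
      unfolding V_def[abs_def] u_def
      by (intro DERIV_sum DERIV_chain2[OF has_real_derivative_pos_part_power2] deriv) (use that in auto)
    then show ?thesis by (rule DERIV_subset) auto
  qed
  have growth_V: "(\<Sum>j<n. 2 * u j \<tau> * y' j \<tau>) \<le> (2 * \<bar>B\<bar> * n) * V \<tau>" if "\<tau> \<in> {0..t}" for \<tau>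
proof -
    have "(\<Sum>j<n. 2 * u j \<tau> * y' j \<tau>) \<le> (\<Sum>j<n. 2 * (B * u j \<tau> * (\<Sum>k<n. u k \<tau>)))"
      using B[OF that] by (intro sum_mono) (simp add: mult.assoc)
    also have "\<dots> = 2 * B * (\<Sum>k<n. u k \<tau>)\<^sup>2"
      by (simp add: power2_eq_square sum_distrib_left sum_distrib_right mult_ac)
    also have "\<dots> \<le> 2 * \<bar>B\<bar> * (\<Sum>k<n. u k \<tau>)\<^sup>2"
      by (intro mult_right_mono) auto
    also have "\<dots> \<le> 2 * \<bar>B\<bar> * (V \<tau> * n)"
      using sum_squared_le_sum_of_squares[of "\<lambda>k. u k \<tau>" "{..<n}"]
      by (intro mult_left_mono) (auto simp: V_def)
    finally show ?thesis by (simp add: mult_ac)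
  qed
  have "V t \<le> exp (2 * \<bar>B\<bar> * n * (t - 0)) * V 0"
    using Gronwall_exp_bound[OF \<open>0 \<le> t\<close> dV growth_V] by blast
  moreover have "V 0 = 0"
    using init by (simp add: V_def u_def)
  ultimately have "V t \<le> 0"
    by simp
  moreover have "(u j t)\<^sup>2 \<le> V t"
    unfolding V_def by (rule member_le_sum) (use \<open>j < n\<close> in auto)
  ultimately have "(u j t)\<^sup>2 \<le> 0"
    by linarith
  then show ?thesis
    by (simp add: u_def)
qed

lemma in_nbrs_subset: "in_nbrs n w i \<subseteq> {..<n}"
  by (auto simp: in_nbrs_def)

locale epidemic_opinion_model =
  fixes n :: nat
    and beta abar :: "nat \<Rightarrow> nat \<Rightarrow> real"
    and beta_min gamma_min :: real
    and gamma :: "nat \<Rightarrow> real"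
    and s x op :: "nat \<Rightarrow> real \<Rightarrow> real"
  assumes beta_min_nonneg: "0 \<le> beta_min"
    and abar_nonneg: "\<And>i j. i < n \<Longrightarrow> j < n \<Longrightarrow> 0 \<le> abar i j"
    and beta_ge: "\<And>i j. i < n \<Longrightarrow> j \<in> in_nbrs n beta i \<Longrightarrow> beta_min \<le> beta i j"
    and init: "\<And>i. i < n \<Longrightarrow> 0 \<le> s i 0 \<and> 0 \<le> x i 0 \<and> op i 0 \<le> 1"
    and ds: "\<And>i t. i < n \<Longrightarrow> 0 \<le> t \<Longrightarrow>
       (s i has_real_derivative
          (- s i t * (\<Sum>j\<in>in_nbrs n beta i. (beta i j - (beta i j - beta_min) * op i t) * x j t)))
       (at t within {0..})"
    and dx: "\<And>i t. i < n \<Longrightarrow> 0 \<le> t \<Longrightarrow>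
       (x i has_real_derivative
          (s i t * (\<Sum>j\<in>in_nbrs n beta i. (beta i j - (beta i j - beta_min) * op i t) * x j t)
           - (gamma_min + (gamma i - gamma_min) * op i t) * x i t))
       (at t within {0..})"
    and dop: "\<And>i t. i < n \<Longrightarrow> 0 \<le> t \<Longrightarrow>
       (op i has_real_derivative
          ((1 - s i t) - ((\<Sum>j<n. abar i j) * op i t - (\<Sum>j<n. abar i j * op j t)) - op i t))
       (at t within {0..})"
begin

definition transmission_rate :: "nat \<Rightarrow> nat \<Rightarrow> real \<Rightarrow> real" where
  "transmission_rate i j t = beta i j - (beta i j - beta_min) * op i t"

definition force_of_infection :: "nat \<Rightarrow> real \<Rightarrow> real" where
  "force_of_infection i t = (\<Sum>j\<in>in_nbrs n beta i. transmission_rate i j t * x j t)"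

definition recovery_rate :: "nat \<Rightarrow> real \<Rightarrow> real" where
  "recovery_rate i t = gamma_min + (gamma i - gamma_min) * op i t"

lemma has_real_derivative_susceptible:
  "i < n \<Longrightarrow> 0 \<le> t \<Longrightarrow>
    (s i has_real_derivative - s i t * force_of_infection i t) (at t within {0..})"
  using ds unfolding force_of_infection_def transmission_rate_def .

lemma has_real_derivative_infected:
  "i < n \<Longrightarrow> 0 \<le> t \<Longrightarrow>
    (x i has_real_derivative s i t * force_of_infection i t - recovery_rate i t * x i t)
    (at t within {0..})"
  using dx unfolding force_of_infection_def transmission_rate_def recovery_rate_def .

lemma continuous_on_states:
  assumes "i < n"
  shows "continuous_on {0..T} (s i)" "continuous_on {0..T} (x i)" "continuous_on {0..T} (op i)"
proof -
  have "continuous_on {0..} (s i)" "continuous_on {0..} (x i)" "continuous_on {0..} (op i)"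
    unfolding continuous_on_eq_continuous_within
    using DERIV_continuous[OF ds[OF assms]] DERIV_continuous[OF dx[OF assms]]
      DERIV_continuous[OF dop[OF assms]] by auto
  moreover have "{0..T} \<subseteq> {0..}"
    by auto
  ultimately show "continuous_on {0..T} (s i)" "continuous_on {0..T} (x i)" "continuous_on {0..T} (op i)"
    by (auto intro: continuous_on_subset)
qed

lemma continuous_on_rates:
  assumes "i < n"
  shows "continuous_on {0..T} (transmission_rate i j)" "continuous_on {0..T} (force_of_infection i)"
    "continuous_on {0..T} (recovery_rate i)"
  using assms continuous_on_states
  unfolding transmission_rate_def[abs_def] force_of_infection_def[abs_def] recovery_rate_def[abs_def]
  by (auto intro!: continuous_intros simp: in_nbrs_def)

lemma susceptible_nonneg:
  assumes "i < n" "0 \<le> t"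
  shows "0 \<le> s i t"
proof -
  have "- s i t \<le> 0"
  proof (rule nonpos_forward_invariant[where y = "\<lambda>j t. - s j t"
        and y' = "\<lambda>j t. force_of_infection j t * s j t"])
    show "((\<lambda>t. - s j t) has_real_derivative force_of_infection j t * s j t) (at t within {0..})"
      if "j < n" "0 \<le> t" for j t
      using DERIV_minus[OF has_real_derivative_susceptible[OF that]] by (simp add: mult_ac)
    fix T :: real
    obtain B where "\<And>j t. j \<in> {..<n} \<Longrightarrow> t \<in> {0..T} \<Longrightarrow> \<bar>force_of_infection j t\<bar> \<le> B"
      using finite_family_compact_bound[of "{..<n}" "{0..T}" force_of_infection] continuous_on_rates(2)
      by auto
    then show "\<exists>B. \<forall>t\<in>{0..T}. \<forall>j<n. max 0 (- s j t) * (force_of_infection j t * s j t)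
        \<le> B * max 0 (- s j t) * (\<Sum>k<n. max 0 (- s k t))"
      by (intro exI ballI allI impI neg_part_mult_le_sum) auto
  qed (use init assms in auto)
  then show ?thesis by simp
qed

lemma abar_le_sum:
  assumes "j < n" "k < n"
  shows "abar j k \<le> (\<Sum>j<n. \<Sum>k<n. abar j k)"
proof -
  have "abar j k \<le> (\<Sum>k<n. abar j k)"
    by (rule member_le_sum) (use assms abar_nonneg in auto)
  also have "\<dots> \<le> (\<Sum>j<n. \<Sum>k<n. abar j k)"
    by (rule member_le_sum[of j _ "\<lambda>j. \<Sum>k<n. abar j k"])
      (use assms abar_nonneg in \<open>auto intro: sum_nonneg\<close>)
  finally show ?thesis .
qed

lemma opinion_growth_le:
  assumes "j < n" "0 \<le> t"
  shows "max 0 (op j t - 1) * ((1 - s j t - op j t) + (\<Sum>k<n. abar j k * (op k t - op j t)))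
    \<le> (\<Sum>j<n. \<Sum>k<n. abar j k) * max 0 (op j t - 1) * (\<Sum>k<n. max 0 (op k t - 1))"
proof -
  have "max 0 (op j t - 1) * (1 - s j t - op j t) \<le> 0"
    using susceptible_nonneg[OF assms] by (cases "1 < op j t") (auto simp: mult_nonneg_nonpos)
  moreover have "max 0 (op j t - 1) * (\<Sum>k<n. abar j k * (op k t - op j t))
      \<le> (\<Sum>j<n. \<Sum>k<n. abar j k) * max 0 (op j t - 1) * (\<Sum>k<n. max 0 (op k t - 1))"
    using abar_nonneg abar_le_sum \<open>j < n\<close> by (intro pos_part_mult_sum_diff_le) auto
  ultimately show ?thesis
    by (simp add: distrib_left)
qed

lemma opinion_le_one:
  assumes "i < n" "0 \<le> t"
  shows "op i t \<le> 1"
proof -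
  have "op i t - 1 \<le> 0"
  proof (rule nonpos_forward_invariant[where y = "\<lambda>j t. op j t - 1"
        and y' = "\<lambda>j t. (1 - s j t - op j t) + (\<Sum>k<n. abar j k * (op k t - op j t))"])
    show "((\<lambda>t. op j t - 1) has_real_derivative
        (1 - s j t - op j t) + (\<Sum>k<n. abar j k * (op k t - op j t))) (at t within {0..})"
      if "j < n" "0 \<le> t" for j t
    proof -
      have "(\<Sum>k<n. abar j k * (op k t - op j t)) = (\<Sum>k<n. abar j k * op k t) - (\<Sum>k<n. abar j k) * op j t"
        by (simp add: right_diff_distrib sum_subtractf sum_distrib_right)
      then have "(1 - s j t) - ((\<Sum>k<n. abar j k) * op j t - (\<Sum>k<n. abar j k * op k t)) - op j t - 0
          = (1 - s j t - op j t) + (\<Sum>k<n. abar j k * (op k t - op j t))"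
        by linarith
      with DERIV_diff[OF dop[OF that] DERIV_const[of 1]] show ?thesis
        by metis
    qed
    fix T :: real
    show "\<exists>B. \<forall>t\<in>{0..T}. \<forall>j<n.
        max 0 (op j t - 1) * ((1 - s j t - op j t) + (\<Sum>k<n. abar j k * (op k t - op j t)))
        \<le> B * max 0 (op j t - 1) * (\<Sum>k<n. max 0 (op k t - 1))"
      using opinion_growth_le
      by (intro exI[of _ "\<Sum>j<n. \<Sum>k<n. abar j k"]) auto
  qed (use init assms in auto)
  then show ?thesis by simp
qed

lemma transmission_rate_nonneg:
  assumes "i < n" "j \<in> in_nbrs n beta i" "0 \<le> t"
  shows "0 \<le> transmission_rate i j t"
proof -
  have "transmission_rate i j t = beta_min + (beta i j - beta_min) * (1 - op i t)"
    by (simp add: transmission_rate_def algebra_simps)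
  then show ?thesis
    using beta_min_nonneg beta_ge[OF assms(1,2)] opinion_le_one[OF assms(1,3)] by simp
qed

lemma infected_growth_le:
  assumes "j < n" "0 \<le> t" "0 \<le> B1" "\<bar>recovery_rate j t\<bar> \<le> B2"
    and "\<And>k. k \<in> in_nbrs n beta j \<Longrightarrow> s j t * transmission_rate j k t \<le> B1"
  shows "max 0 (- x j t) * (recovery_rate j t * x j t
      + (\<Sum>k\<in>in_nbrs n beta j. s j t * transmission_rate j k t * - x k t))
    \<le> (B2 + B1) * max 0 (- x j t) * (\<Sum>k<n. max 0 (- x k t))"
  unfolding distrib_left distrib_right
proof (rule add_mono)
  show "max 0 (- x j t) * (recovery_rate j t * x j t)
      \<le> B2 * max 0 (- x j t) * (\<Sum>k<n. max 0 (- x k t))"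
    using assms(1,4) by (intro neg_part_mult_le_sum) auto
  show "max 0 (- x j t) * (\<Sum>k\<in>in_nbrs n beta j. s j t * transmission_rate j k t * - x k t)
      \<le> B1 * max 0 (- x j t) * (\<Sum>k<n. max 0 (- x k t))"
    using assms in_nbrs_subset susceptible_nonneg transmission_rate_nonneg
    by (intro neg_part_mult_sum_le) auto
qed

lemma infected_nonneg:
  assumes "i < n" "0 \<le> t"
  shows "0 \<le> x i t"
proof -
  have "- x i t \<le> 0"
  proof (rule nonpos_forward_invariant[where y = "\<lambda>j t. - x j t"
        and y' = "\<lambda>j t. recovery_rate j t * x j t
          + (\<Sum>k\<in>in_nbrs n beta j. s j t * transmission_rate j k t * - x k t)"])
    show "((\<lambda>t. - x j t) has_real_derivative recovery_rate j t * x j t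
          + (\<Sum>k\<in>in_nbrs n beta j. s j t * transmission_rate j k t * - x k t)) (at t within {0..})"
      if "j < n" "0 \<le> t" for j t
      using DERIV_minus[OF has_real_derivative_infected[OF that]]
      by (simp add: force_of_infection_def sum_distrib_left sum_negf mult.assoc)
    fix T :: real
    obtain B1 where B1: "\<And>jk t. jk \<in> {..<n} \<times> {..<n} \<Longrightarrow> t \<in> {0..T} \<Longrightarrow>
        \<bar>s (fst jk) t * transmission_rate (fst jk) (snd jk) t\<bar> \<le> B1"
      by (rule finite_family_compact_bound[of "{..<n} \<times> {..<n}" "{0..T}"
            "\<lambda>jk t. s (fst jk) t * transmission_rate (fst jk) (snd jk) t"])
        (use continuous_on_states(1) continuous_on_rates(1) in \<open>auto intro!: continuous_intros\<close>)
    obtain B2 where B2: "\<And>j t. j \<in> {..<n} \<Longrightarrow> t \<in> {0..T} \<Longrightarrow> \<bar>recovery_rate j t\<bar> \<le> B2"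
      using finite_family_compact_bound[of "{..<n}" "{0..T}" recovery_rate] continuous_on_rates(3)
      by auto
    have "max 0 (- x j t) * (recovery_rate j t * x j t
          + (\<Sum>k\<in>in_nbrs n beta j. s j t * transmission_rate j k t * - x k t))
        \<le> (B2 + B1) * max 0 (- x j t) * (\<Sum>k<n. max 0 (- x k t))"
      if "j < n" "t \<in> {0..T}" for j t
    proof (rule infected_growth_le)
      show "0 \<le> B1"
        using B1[of "(j, j)" t] that by auto
      show "s j t * transmission_rate j k t \<le> B1" if "k \<in> in_nbrs n beta j" for k
        using B1[of "(j, k)" t] in_nbrs_subset \<open>j < n\<close> \<open>t \<in> {0..T}\<close> that by fastforce
    qed (use B2 that in auto)
    then show "\<exists>B. \<forall>t\<in>{0..T}. \<forall>j<n. max 0 (- x j t) * (recovery_rate j t * x j t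
          + (\<Sum>k\<in>in_nbrs n beta j. s j t * transmission_rate j k t * - x k t))
        \<le> B * max 0 (- x j t) * (\<Sum>k<n. max 0 (- x k t))"
      by blast
  qed (use init assms in auto)
  then show ?thesis by simp
qed

lemma force_of_infection_nonneg:
  assumes "i < n" "0 \<le> t"
  shows "0 \<le> force_of_infection i t"
  unfolding force_of_infection_def
proof (rule sum_nonneg)
  fix j assume j: "j \<in> in_nbrs n beta i"
  then have "j < n"
    using in_nbrs_subset by auto
  show "0 \<le> transmission_rate i j t * x j t"
    using transmission_rate_nonneg[OF assms(1) j assms(2)] infected_nonneg[OF \<open>j < n\<close> assms(2)] by simp
qed

lemma susceptible_antimono:
  assumes "i < n" "0 \<le> t1" "t1 \<le> t2"
  shows "s i t2 \<le> s i t1"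
proof (rule DERIV_nonpos_imp_nonincreasing_within[OF \<open>t1 \<le> t2\<close>])
  fix t assume t: "t \<in> {t1..t2}"
  then have "0 \<le> t"
    using assms(2) by simp
  show "(s i has_real_derivative - s i t * force_of_infection i t) (at t within {t1..t2})"
    by (rule DERIV_subset[OF has_real_derivative_susceptible[OF \<open>i < n\<close> \<open>0 \<le> t\<close>]])
      (use assms(2) in auto)
  show "- s i t * force_of_infection i t \<le> 0"
    using susceptible_nonneg[OF \<open>i < n\<close> \<open>0 \<le> t\<close>] force_of_infection_nonneg[OF \<open>i < n\<close> \<open>0 \<le> t\<close>]
    by simp
qed

end

theorem lemma2:
  fixes n :: nat
    and beta abar :: "nat \<Rightarrow> nat \<Rightarrow> real"
    and beta_min gamma_min :: real
    and gamma :: "nat \<Rightarrow> real"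
    and s x op :: "nat \<Rightarrow> real \<Rightarrow> real"
  assumes beta_nonneg: "\<And>i j. i < n \<Longrightarrow> j < n \<Longrightarrow> beta i j \<ge> 0"
    and abar_nonneg: "\<And>i j. i < n \<Longrightarrow> j < n \<Longrightarrow> abar i j \<ge> 0"
    and beta_min_pos: "beta_min > 0"
    and gamma_min_pos: "gamma_min > 0"
    and gamma_ge: "\<And>i. i < n \<Longrightarrow> gamma i \<ge> gamma_min"
    and beta_ge: "\<And>i j. i < n \<Longrightarrow> j \<in> in_nbrs n beta i \<Longrightarrow> beta i j \<ge> beta_min"
    and sc_G: "strongly_connected n beta"
    and sc_Gbar: "strongly_connected n abar"
    and init: "\<And>i. i < n \<Longrightarrow> s i 0 \<in> {0..1} \<and> x i 0 \<in> {0..1} \<and> op i 0 \<in> {0..1}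
                                  \<and> s i 0 + x i 0 \<le> 1"
    and ds: "\<And>i t. i < n \<Longrightarrow> t \<ge> 0 \<Longrightarrow>
       (s i has_real_derivative
          (- s i t * (\<Sum>j\<in>in_nbrs n beta i. (beta i j - (beta i j - beta_min) * op i t) * x j t)))
       (at t within {0..})"
    and dx: "\<And>i t. i < n \<Longrightarrow> t \<ge> 0 \<Longrightarrow>
       (x i has_real_derivative
          (s i t * (\<Sum>j\<in>in_nbrs n beta i. (beta i j - (beta i j - beta_min) * op i t) * x j t)
           - (gamma_min + (gamma i - gamma_min) * op i t) * x i t))
       (at t within {0..})"
    and dop: "\<And>i t. i < n \<Longrightarrow> t \<ge> 0 \<Longrightarrow>
       (op i has_real_derivative
          ((1 - s i t) - ((\<Sum>j<n. abar i j) * op i t - (\<Sum>j<n. abar i j * op j t)) - op i t))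
       (at t within {0..})"
  shows "\<forall>i<n. \<forall>t1 t2. 0 \<le> t1 \<longrightarrow> t1 \<le> t2 \<longrightarrow> s i t2 \<le> s i t1"
proof -
  interpret epidemic_opinion_model n beta abar beta_min gamma_min gamma s x op
    using beta_min_pos abar_nonneg beta_ge init ds dx dop by unfold_locales auto
  show ?thesis
    using susceptible_antimono by blast
qed

end
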